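(* Let $n\in\mathbb N$, let $\mathcal H$ be a Hilbert space, and let $\phi:M_n(\mathbb C)\to B(\mathcal H)$ be a positive linear map. Then the restriction $\phi_0$ of $\phi$ to the operator system $C(S^1)^{(n)}$ of $n\times n$ Toeplitz matrices is completely positive, i.e. for every $p\in\mathbb N$ and every positive semidefinite $p\times p$ block matrix $[x_{ij}]$ with all $x_{ij}\in C(S^1)^{(n)}$, the operator matrix $[\phi(x_{ij})]$ is positive on $\mathcal H^p$.
   Context: $C(S^1)^{(n)}\subseteq M_n(\mathbb C)$ denotes the set of complex Toeplitz matrices $[\tau_{k-\ell}]_{k,\ell=0}^{n-1}$. A linear map is positive if it maps positive semidefinite matrices to positive operators. *)

theory Defs
  imports "HOL-Analysis.Analysis" "Jordan_Normal_Form.Matrix"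
begin

class chilbert = banach +
  fixes scaleC :: "complex \<Rightarrow> 'a \<Rightarrow> 'a" (infixr "*\<^sub>C" 75)
    and cinner :: "'a \<Rightarrow> 'a \<Rightarrow> complex"
  assumes scaleC_add_right: "a *\<^sub>C (x + y) = a *\<^sub>C x + a *\<^sub>C y"
    and scaleC_add_left: "(a + b) *\<^sub>C x = a *\<^sub>C x + b *\<^sub>C x"
    and scaleC_scaleC: "a *\<^sub>C (b *\<^sub>C x) = (a * b) *\<^sub>C x"
    and scaleC_one: "1 *\<^sub>C x = x"
    and scaleC_of_real: "complex_of_real r *\<^sub>C x = r *\<^sub>R x"
    and cinner_cnj: "cinner y x = cnj (cinner x y)"
    and cinner_add_right: "cinner x (y + z) = cinner x y + cinner x z"
    and cinner_scaleC_right: "cinner x (a *\<^sub>C y) = a * cinner x y"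
    and cinner_self_nonneg: "Im (cinner x x) = 0 \<and> Re (cinner x x) \<ge> 0"
    and norm_cinner: "norm x = sqrt (Re (cinner x x))"

definition bounded_op :: "('a::chilbert \<Rightarrow> 'a) \<Rightarrow> bool" where
  "bounded_op T \<longleftrightarrow> (\<forall>x y. T (x + y) = T x + T y) \<and> (\<forall>a x. T (a *\<^sub>C x) = a *\<^sub>C T x)
     \<and> (\<exists>K. \<forall>x. norm (T x) \<le> norm x * K)"

definition positive_op :: "('a::chilbert \<Rightarrow> 'a) \<Rightarrow> bool" where
  "positive_op T \<longleftrightarrow> (\<forall>x. Im (cinner x (T x)) = 0 \<and> Re (cinner x (T x)) \<ge> 0)"

definition psd_mat :: "nat \<Rightarrow> complex mat \<Rightarrow> bool" where
  "psd_mat m A \<longleftrightarrow> A \<in> carrier_mat m m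
     \<and> (\<forall>k<m. \<forall>l<m. A $$ (l, k) = cnj (A $$ (k, l)))
     \<and> (\<forall>v :: nat \<Rightarrow> complex.
          Im (\<Sum>k<m. \<Sum>l<m. cnj (v k) * A $$ (k, l) * v l) = 0
        \<and> Re (\<Sum>k<m. \<Sum>l<m. cnj (v k) * A $$ (k, l) * v l) \<ge> 0)"

definition toeplitz_mat :: "nat \<Rightarrow> complex mat \<Rightarrow> bool" where
  "toeplitz_mat n A \<longleftrightarrow> A \<in> carrier_mat n n
     \<and> (\<exists>\<tau> :: int \<Rightarrow> complex. \<forall>k<n. \<forall>l<n. A $$ (k, l) = \<tau> (int k - int l))"

definition block_mat :: "nat \<Rightarrow> nat \<Rightarrow> (nat \<Rightarrow> nat \<Rightarrow> complex mat) \<Rightarrow> complex mat" where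
  "block_mat p n X = mat (p * n) (p * n) (\<lambda>(a, b). X (a div n) (b div n) $$ (a mod n, b mod n))"

definition linear_map_to_BH :: "nat \<Rightarrow> (complex mat \<Rightarrow> 'a::chilbert \<Rightarrow> 'a) \<Rightarrow> bool" where
  "linear_map_to_BH n \<phi> \<longleftrightarrow>
     (\<forall>X \<in> carrier_mat n n. bounded_op (\<phi> X))
   \<and> (\<forall>X \<in> carrier_mat n n. \<forall>Y \<in> carrier_mat n n. \<phi> (X + Y) = (\<lambda>h. \<phi> X h + \<phi> Y h))
   \<and> (\<forall>X \<in> carrier_mat n n. \<forall>a. \<phi> (a \<cdot>\<^sub>m X) = (\<lambda>h. a *\<^sub>C \<phi> X h))"

definition positive_map :: "nat \<Rightarrow> (complex mat \<Rightarrow> 'a::chilbert \<Rightarrow> 'a) \<Rightarrow> bool" where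
  "positive_map n \<phi> \<longleftrightarrow> (\<forall>X. psd_mat n X \<longrightarrow> positive_op (\<phi> X))"

end

theory Submission
  imports Defs "Jordan_Normal_Form.Spectral_Radius"
begin

text \<open>Write the positive block matrix as a Gram matrix: the \<open>(k, l)\<close> entry of block
  \<open>(i, j)\<close> is \<open>\<langle>g\<^sub>i\<^sub>k, g\<^sub>j\<^sub>l\<rangle>\<close> for vectors \<open>g\<^sub>i\<^sub>k \<in> \<complex>\<^sup>M\<close>. The Toeplitz condition says
  that \<open>g\<^sub>i\<^sub>,\<^sub>k \<mapsto> g\<^sub>i\<^sub>,\<^sub>k\<^sub>+\<^sub>1\<close> preserves inner products, so (after extension to a
  unitary, or directly when the \<open>g\<^sub>i\<^sub>k\<close> do not span) there are \<open>f \<noteq> 0\<close> and \<open>|\<mu>| = 1\<close>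
  with \<open>\<langle>g\<^sub>i\<^sub>k, f\<rangle> = \<mu>\<^sup>k \<langle>g\<^sub>i\<^sub>0, f\<rangle>\<close>. Splitting off the direction \<open>f\<close> writes the block
  matrix as \<open>[\<beta>\<^sub>i \<beta>\<^sub>j\<^sup>*] \<otimes> [\<mu>\<^sup>k \<mu>\<^sup>*\<^sup>l]\<close> plus a block Toeplitz Gram matrix of vectors in
  \<open>\<complex>\<^sup>M\<^sup>-\<^sup>1\<close>. The first summand is mapped to a positive operator matrix because \<open>\<phi>\<close> is
  positive on the rank one matrix \<open>[\<mu>\<^sup>k \<mu>\<^sup>*\<^sup>l]\<close>, and induction on \<open>M\<close> handles the
  second.\<close>

unbundle no vec_syntax

section \<open>The standard inner product on \<open>\<complex>\<^sup>M\<close>\<close>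

text \<open>Vectors of \<open>\<complex>\<^sup>M\<close> are represented by functions \<^typ>\<open>nat \<Rightarrow> complex\<close> of which only the
  first \<open>M\<close> values matter.\<close>
definition std_inner :: "nat \<Rightarrow> (nat \<Rightarrow> complex) \<Rightarrow> (nat \<Rightarrow> complex) \<Rightarrow> complex" where
  "std_inner M x y = (\<Sum>r<M. cnj (x r) * y r)"

lemma cnj_mult_self: "cnj z * z = of_real ((cmod z)\<^sup>2)"
  by (metis complex_norm_square mult.commute)

lemma sum_cnj_mult_self_eq_0D:
  assumes "finite S" "(\<Sum>s\<in>S. cnj (z s) * z s) = 0" "s \<in> S"
  shows "z s = 0"
proof -
  have "of_real (\<Sum>s\<in>S. (cmod (z s))\<^sup>2) = (0 :: complex)"
    using assms(2) unfolding of_real_sum cnj_mult_self by simp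
  then have "(\<Sum>s\<in>S. (cmod (z s))\<^sup>2) = 0" by (metis of_real_eq_0_iff)
  with assms(1,3) have "(cmod (z s))\<^sup>2 = 0"
    using sum_nonneg_eq_0_iff[of S "\<lambda>s. (cmod (z s))\<^sup>2"] by auto
  then show ?thesis by simp
qed

lemma std_inner_cong:
  "(\<And>r. r < M \<Longrightarrow> x r = x' r) \<Longrightarrow> (\<And>r. r < M \<Longrightarrow> y r = y' r) \<Longrightarrow>
    std_inner M x y = std_inner M x' y'"
  unfolding std_inner_def by (rule sum.cong) auto

lemma cnj_std_inner: "cnj (std_inner M x y) = std_inner M y x"
  unfolding std_inner_def by (simp add: mult.commute)

lemma cnj_std_inner_eq_0: "std_inner M x y = 0 \<Longrightarrow> std_inner M y x = 0"
  by (metis cnj_std_inner complex_cnj_zero)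

lemma std_inner_zero_left [simp]: "std_inner M (\<lambda>r. 0) y = 0"
  unfolding std_inner_def by simp

lemma std_inner_zero_right [simp]: "std_inner M x (\<lambda>r. 0) = 0"
  unfolding std_inner_def by simp

lemma std_inner_scale_right: "std_inner M x (\<lambda>r. c * y r) = c * std_inner M x y"
  unfolding std_inner_def by (simp add: sum_distrib_left algebra_simps)

lemma std_inner_scale_left: "std_inner M (\<lambda>r. c * x r) y = cnj c * std_inner M x y"
  unfolding std_inner_def by (simp add: sum_distrib_left algebra_simps)

lemma std_inner_diff_left: "std_inner M (\<lambda>r. x r - z r) y = std_inner M x y - std_inner M z y"
  unfolding std_inner_def by (simp add: sum_subtractf algebra_simps)

lemma std_inner_Suc: "std_inner (Suc M) x y = std_inner M x y + cnj (x M) * y M"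
  unfolding std_inner_def by simp

lemma std_inner_self: "std_inner M x x = of_real (\<Sum>r<M. (cmod (x r))\<^sup>2)"
  unfolding std_inner_def of_real_sum cnj_mult_self by simp

lemma std_inner_self_eq_0D: "std_inner M x x = 0 \<Longrightarrow> r < M \<Longrightarrow> x r = 0"
  unfolding std_inner_def using sum_cnj_mult_self_eq_0D[of "{..<M}" x r] by auto

lemma std_inner_sum_left:
  assumes "finite S"
  shows "std_inner M (\<lambda>r. \<Sum>s\<in>S. a s * x s r) y = (\<Sum>s\<in>S. cnj (a s) * std_inner M (x s) y)"
proof -
  have "std_inner M (\<lambda>r. \<Sum>s\<in>S. a s * x s r) y
      = (\<Sum>r<M. \<Sum>s\<in>S. cnj (a s) * (cnj (x s r) * y r))"
    unfolding std_inner_def by (simp add: sum_distrib_left sum_distrib_right algebra_simps)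
  also have "\<dots> = (\<Sum>s\<in>S. \<Sum>r<M. cnj (a s) * (cnj (x s r) * y r))"
    by (rule sum.swap)
  also have "\<dots> = (\<Sum>s\<in>S. cnj (a s) * std_inner M (x s) y)"
    unfolding std_inner_def by (simp add: sum_distrib_left)
  finally show ?thesis .
qed

lemma std_inner_sum_right:
  assumes "finite T"
  shows "std_inner M x (\<lambda>r. \<Sum>t\<in>T. b t * y t r) = (\<Sum>t\<in>T. b t * std_inner M x (y t))"
proof -
  have "cnj (std_inner M x (\<lambda>r. \<Sum>t\<in>T. b t * y t r)) = (\<Sum>t\<in>T. cnj (b t * std_inner M x (y t)))"
    unfolding cnj_std_inner std_inner_sum_left[OF assms] by (simp add: cnj_std_inner)
  then show ?thesis by (metis cnj_sum complex_cnj_cnj)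
qed

lemma std_inner_sum_sum:
  assumes "finite S" "finite T"
  shows "std_inner M (\<lambda>r. \<Sum>s\<in>S. a s * x s r) (\<lambda>r. \<Sum>t\<in>T. b t * y t r)
       = (\<Sum>s\<in>S. \<Sum>t\<in>T. cnj (a s) * b t * std_inner M (x s) (y t))"
  by (simp add: std_inner_sum_left std_inner_sum_right assms sum_distrib_left mult.assoc)

lemma std_inner_delta_left:
  assumes "r0 < M"
  shows "std_inner M (\<lambda>r. if r = r0 then 1 else 0) y = y r0"
proof -
  have "std_inner M (\<lambda>r. if r = r0 then 1 else 0) y = (\<Sum>r<M. if r = r0 then y r else 0)"
    unfolding std_inner_def by (intro sum.cong refl) auto
  also have "\<dots> = y r0" using assms by (simp add: sum.delta)
  finally show ?thesis .
qed

lemma std_inner_diff_scale: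
  "std_inner M (\<lambda>r. x r - c * u r) (\<lambda>r. y r - d * u r)
   = std_inner M x y - d * std_inner M x u - cnj c * std_inner M u y + cnj c * d * std_inner M u u"
proof -
  have "std_inner M (\<lambda>r. x r - c * u r) (\<lambda>r. y r - d * u r)
     = (\<Sum>r<M. cnj (x r) * y r - d * (cnj (x r) * u r) - cnj c * (cnj (u r) * y r)
          + cnj c * d * (cnj (u r) * u r))"
    unfolding std_inner_def by (intro sum.cong refl) (simp add: algebra_simps)
  also have "\<dots> = std_inner M x y - d * std_inner M x u - cnj c * std_inner M u y
      + cnj c * d * std_inner M u u"
    unfolding std_inner_def by (simp add: sum.distrib sum_subtractf sum_distrib_left)
  finally show ?thesis .
qed

definition std_isometry :: "nat \<Rightarrow> ((nat \<Rightarrow> complex) \<Rightarrow> nat \<Rightarrow> complex) \<Rightarrow> bool" where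
  "std_isometry M U \<longleftrightarrow> (\<forall>x y. std_inner M (U x) (U y) = std_inner M x y)"

definition mat_apply :: "complex mat \<Rightarrow> (nat \<Rightarrow> complex) \<Rightarrow> nat \<Rightarrow> complex" where
  "mat_apply A x = (\<lambda>r. (A *\<^sub>v vec (dim_col A) x) $ r)"

lemma vec_index_eta: "v \<in> carrier_vec M \<Longrightarrow> vec M (\<lambda>i. v $ i) = v"
  by (intro eq_vecI) auto

lemma mat_apply_mult:
  assumes "A \<in> carrier_mat M M" "B \<in> carrier_mat M M"
  shows "mat_apply (A * B) x = mat_apply A (mat_apply B x)"
proof -
  have "(A * B) *\<^sub>v vec M x = A *\<^sub>v (B *\<^sub>v vec M x)"
    using assms by (simp add: assoc_mult_mat_vec)
  moreover have "vec M (mat_apply B x) = B *\<^sub>v vec M x"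
    unfolding mat_apply_def using assms(2) by (simp add: vec_index_eta)
  ultimately show ?thesis
    unfolding mat_apply_def using assms by simp
qed

lemma carrier_vec_nonzero_entry:
  "v \<in> carrier_vec M \<Longrightarrow> v \<noteq> 0\<^sub>v M \<Longrightarrow> \<exists>r<M. v $ r \<noteq> 0"
  by (metis eq_vecI index_zero_vec(1,2) carrier_vecD)

lemma det_0_obtain_null_fun:
  assumes "A \<in> carrier_mat M M" "Determinant.det A = 0"
  obtains x where "\<exists>r<M. x r \<noteq> 0" "\<And>r. r < M \<Longrightarrow> mat_apply A x r = 0"
proof -
  obtain v where v: "v \<in> carrier_vec M" "v \<noteq> 0\<^sub>v M" "A *\<^sub>v v = 0\<^sub>v M"
    using det_0_iff_vec_prod_zero[OF assms(1)] assms(2) by blast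
  show ?thesis
  proof
    show "\<exists>r<M. v $ r \<noteq> 0" by (rule carrier_vec_nonzero_entry[OF v(1,2)])
    show "mat_apply A (\<lambda>i. v $ i) r = 0" if "r < M" for r
      unfolding mat_apply_def using assms(1) v that by (simp add: vec_index_eta)
  qed
qed

section \<open>Families with equal Gram matrices\<close>

definition outer_sum_mat ::
    "nat \<Rightarrow> 'i set \<Rightarrow> ('i \<Rightarrow> nat \<Rightarrow> complex) \<Rightarrow> ('i \<Rightarrow> nat \<Rightarrow> complex) \<Rightarrow> complex mat" where
  "outer_sum_mat M S g h = mat M M (\<lambda>(r, i). \<Sum>s\<in>S. h s r * cnj (g s i))"

lemma outer_sum_mat_carrier: "outer_sum_mat M S g h \<in> carrier_mat M M"
  unfolding outer_sum_mat_def by simp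

lemma mat_apply_outer_sum_mat:
  assumes "r < M"
  shows "mat_apply (outer_sum_mat M S g h) x r = (\<Sum>s\<in>S. h s r * std_inner M (g s) x)"
proof -
  have "mat_apply (outer_sum_mat M S g h) x r = (\<Sum>i<M. (\<Sum>s\<in>S. h s r * cnj (g s i)) * x i)"
    using assms
    by (simp add: mat_apply_def outer_sum_mat_def scalar_prod_def atLeast0LessThan)
  also have "\<dots> = (\<Sum>i<M. \<Sum>s\<in>S. h s r * (cnj (g s i) * x i))"
    by (simp add: sum_distrib_right mult.assoc)
  also have "\<dots> = (\<Sum>s\<in>S. \<Sum>i<M. h s r * (cnj (g s i) * x i))"
    by (rule sum.swap)
  also have "\<dots> = (\<Sum>s\<in>S. h s r * std_inner M (g s) x)"
    unfolding std_inner_def by (simp add: sum_distrib_left)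
  finally show ?thesis .
qed

lemma equal_gram_same_relations:
  assumes fin: "finite S"
    and gram: "\<And>s t. s \<in> S \<Longrightarrow> t \<in> S \<Longrightarrow> std_inner M (h s) (h t) = std_inner M (g s) (g t)"
    and rel: "\<And>r. r < M \<Longrightarrow> (\<Sum>s\<in>S. d s * g s r) = 0"
    and r: "r < M"
  shows "(\<Sum>s\<in>S. d s * h s r) = 0"
proof -
  have "std_inner M (\<lambda>r. \<Sum>s\<in>S. d s * h s r) (\<lambda>r. \<Sum>s\<in>S. d s * h s r)
      = (\<Sum>s\<in>S. \<Sum>t\<in>S. cnj (d s) * d t * std_inner M (h s) (h t))"
    by (rule std_inner_sum_sum[OF fin fin])
  also have "\<dots> = (\<Sum>s\<in>S. \<Sum>t\<in>S. cnj (d s) * d t * std_inner M (g s) (g t))"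
    using gram by (intro sum.cong refl) auto
  also have "\<dots> = std_inner M (\<lambda>r. \<Sum>s\<in>S. d s * g s r) (\<lambda>r. \<Sum>s\<in>S. d s * g s r)"
    by (rule std_inner_sum_sum[OF fin fin, symmetric])
  also have "\<dots> = std_inner M (\<lambda>r. 0) (\<lambda>r. 0)"
    by (rule std_inner_cong) (use rel in auto)
  finally show ?thesis using std_inner_self_eq_0D r by simp
qed

lemma equal_gram_transfer_expansion:
  assumes fin: "finite S"
    and gram: "\<And>s t. s \<in> S \<Longrightarrow> t \<in> S \<Longrightarrow> std_inner M (h s) (h t) = std_inner M (g s) (g t)"
    and t: "t \<in> S" and expansion: "\<And>r. r < M \<Longrightarrow> g t r = (\<Sum>s\<in>S. c s * g s r)"
    and r: "r < M"
  shows "h t r = (\<Sum>s\<in>S. c s * h s r)"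
proof -
  define d where "d s = c s - (if s = t then 1 else 0)" for s
  have d_sum: "(\<Sum>s\<in>S. d s * k s q) = (\<Sum>s\<in>S. c s * k s q) - k t q"
    for k :: "'a \<Rightarrow> nat \<Rightarrow> complex" and q
  proof -
    have "(\<Sum>s\<in>S. d s * k s q) = (\<Sum>s\<in>S. c s * k s q - (if s = t then k t q else 0))"
      unfolding d_def by (intro sum.cong refl) (auto simp: algebra_simps)
    also have "\<dots> = (\<Sum>s\<in>S. c s * k s q) - k t q"
      using fin t by (simp add: sum_subtractf)
    finally show ?thesis .
  qed
  have "(\<Sum>s\<in>S. d s * g s q) = 0" if "q < M" for q
    using expansion[OF that] by (simp add: d_sum)
  then have "(\<Sum>s\<in>S. d s * h s r) = 0"
    using equal_gram_same_relations[of S M h g d r] fin gram r by blast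
  then show ?thesis by (simp add: d_sum)
qed

lemma outer_sum_mat_det_0_obtain_orthogonal:
  assumes "finite S" "Determinant.det (outer_sum_mat M S g g) = 0"
  obtains x where "\<exists>r<M. x r \<noteq> 0" "\<And>s. s \<in> S \<Longrightarrow> std_inner M (g s) x = 0"
proof -
  obtain x where x: "\<exists>r<M. x r \<noteq> 0" "\<And>r. r < M \<Longrightarrow> mat_apply (outer_sum_mat M S g g) x r = 0"
    using det_0_obtain_null_fun[OF outer_sum_mat_carrier assms(2)] by blast
  have "(\<Sum>s\<in>S. cnj (std_inner M (g s) x) * std_inner M (g s) x)
      = std_inner M (\<lambda>r. \<Sum>s\<in>S. std_inner M (g s) x * g s r) x"
    by (rule std_inner_sum_left[OF assms(1), symmetric])
  also have "\<dots> = std_inner M (\<lambda>r. 0) x"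
    using x(2) by (intro std_inner_cong) (auto simp: mat_apply_outer_sum_mat mult.commute)
  finally have "(\<Sum>s\<in>S. cnj (std_inner M (g s) x) * std_inner M (g s) x) = 0" by simp
  then have "std_inner M (g s) x = 0" if "s \<in> S" for s
    using sum_cnj_mult_self_eq_0D[OF assms(1), of "\<lambda>s. std_inner M (g s) x"] that by blast
  with x(1) show ?thesis by (rule that)
qed

lemma outer_sum_mat_det_0_if_orthogonal:
  assumes x: "\<exists>r<M. x r \<noteq> 0" and orth: "\<And>s. s \<in> S \<Longrightarrow> std_inner M x (k s) = 0"
  shows "Determinant.det (outer_sum_mat M S g k) = 0"
proof -
  define C where "C = outer_sum_mat M S g k"
  have C: "C \<in> carrier_mat M M" unfolding C_def by (rule outer_sum_mat_carrier)
  define v where "v = vec M (\<lambda>i. cnj (x i))"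
  have "transpose_mat C *\<^sub>v v = 0\<^sub>v M"
  proof (rule eq_vecI)
    fix r assume "r < dim_vec (0\<^sub>v M :: complex vec)"
    then have r: "r < M" by simp
    have "(transpose_mat C *\<^sub>v v) $ r = (\<Sum>i<M. (\<Sum>s\<in>S. k s i * cnj (g s r)) * cnj (x i))"
      using r C unfolding C_def outer_sum_mat_def v_def
      by (simp add: scalar_prod_def atLeast0LessThan)
    also have "\<dots> = (\<Sum>i<M. \<Sum>s\<in>S. cnj (g s r) * (cnj (x i) * k s i))"
      by (simp add: sum_distrib_left sum_distrib_right mult_ac)
    also have "\<dots> = (\<Sum>s\<in>S. \<Sum>i<M. cnj (g s r) * (cnj (x i) * k s i))"
      by (rule sum.swap)
    also have "\<dots> = (\<Sum>s\<in>S. cnj (g s r) * std_inner M x (k s))"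
      unfolding std_inner_def by (simp add: sum_distrib_left)
    also have "\<dots> = 0"
      using orth by simp
    finally show "(transpose_mat C *\<^sub>v v) $ r = 0\<^sub>v M $ r"
      using r by simp
  qed (use C in auto)
  moreover have "v \<noteq> 0\<^sub>v M"
  proof
    assume "v = 0\<^sub>v M"
    then have "\<forall>r<M. v $ r = 0" by simp
    with x show False unfolding v_def by auto
  qed
  moreover have "v \<in> carrier_vec M" unfolding v_def by simp
  moreover have "transpose_mat C \<in> carrier_mat M M" using C by simp
  ultimately have "Determinant.det (transpose_mat C) = 0"
    using det_0_iff_vec_prod_zero by blast
  then show ?thesis using det_transpose[OF C] unfolding C_def by simp
qed

text \<open>A vector orthogonal to all \<open>g\<^sub>s\<close> makes \<open>\<Sum>\<^sub>s g\<^sub>s (h\<^sub>s - g\<^sub>s)\<^sup>*\<close> singular. A null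
  vector \<open>y\<close> of it yields coefficients \<open>d\<^sub>s = \<langle>h\<^sub>s - g\<^sub>s, y\<rangle>\<close> that are a linear relation
  of both families, whence \<open>\<Sum>\<^sub>s |d\<^sub>s|\<^sup>2 = \<langle>\<Sum>\<^sub>s d\<^sub>s h\<^sub>s, y\<rangle> - \<langle>\<Sum>\<^sub>s d\<^sub>s g\<^sub>s, y\<rangle> = 0\<close>.\<close>
lemma equal_gram_nonspanning:
  assumes fin: "finite S"
    and gram: "\<And>s t. s \<in> S \<Longrightarrow> t \<in> S \<Longrightarrow> std_inner M (h s) (h t) = std_inner M (g s) (g t)"
    and singular: "Determinant.det (outer_sum_mat M S g g) = 0"
  obtains y where "\<exists>r<M. y r \<noteq> 0" "\<And>s. s \<in> S \<Longrightarrow> std_inner M (h s) y = std_inner M (g s) y"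
proof -
  let ?C = "outer_sum_mat M S (\<lambda>s r. h s r - g s r) g"
  obtain x where "\<exists>r<M. x r \<noteq> 0" "\<And>s. s \<in> S \<Longrightarrow> std_inner M (g s) x = 0"
    using outer_sum_mat_det_0_obtain_orthogonal[OF fin singular] by blast
  then have "Determinant.det ?C = 0"
    by (intro outer_sum_mat_det_0_if_orthogonal[of M x]) (auto intro: cnj_std_inner_eq_0)
  then obtain y where y: "\<exists>r<M. y r \<noteq> 0" "\<And>r. r < M \<Longrightarrow> mat_apply ?C y r = 0"
    using det_0_obtain_null_fun[OF outer_sum_mat_carrier] by blast
  define d where "d s = std_inner M (h s) y - std_inner M (g s) y" for s
  have dg: "(\<Sum>s\<in>S. d s * g s r) = 0" if "r < M" for r
    using y(2)[OF that]
    by (simp add: mat_apply_outer_sum_mat[OF that] d_def std_inner_diff_left mult.commute)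
  have dh: "(\<Sum>s\<in>S. d s * h s r) = 0" if "r < M" for r
    by (rule equal_gram_same_relations[OF fin gram dg that])
  have "(\<Sum>s\<in>S. cnj (d s) * d s)
      = std_inner M (\<lambda>r. \<Sum>s\<in>S. d s * h s r) y - std_inner M (\<lambda>r. \<Sum>s\<in>S. d s * g s r) y"
    unfolding std_inner_sum_left[OF fin] d_def by (simp add: sum_subtractf right_diff_distrib)
  also have "\<dots> = 0"
    using dh dg by (simp add: std_inner_cong[of M _ "\<lambda>r. 0" y y])
  finally have "d s = 0" if "s \<in> S" for s
    using sum_cnj_mult_self_eq_0D[OF fin _ that] by blast
  with y(1) show ?thesis
    using that unfolding d_def by simp
qed

lemma outer_sum_mat_det_nonzero_span:
  assumes "Determinant.det (outer_sum_mat M S g g) \<noteq> 0"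
  obtains B where "B \<in> carrier_mat M M"
    "\<And>x r. r < M \<Longrightarrow> x r = (\<Sum>s\<in>S. std_inner M (g s) (mat_apply B x) * g s r)"
proof -
  have "outer_sum_mat M S g g \<in> Units (ring_mat TYPE(complex) M ())"
    by (rule det_non_zero_imp_unit[OF outer_sum_mat_carrier assms])
  then obtain B where B: "B \<in> carrier_mat M M" "outer_sum_mat M S g g * B = 1\<^sub>m M"
    unfolding Units_def ring_mat_def by auto
  show ?thesis
  proof (rule that[OF B(1)])
    fix x and r assume r: "r < M"
    have "x r = mat_apply (outer_sum_mat M S g g * B) x r"
      unfolding B(2) mat_apply_def using r by simp
    also have "\<dots> = (\<Sum>s\<in>S. std_inner M (g s) (mat_apply B x) * g s r)"
      unfolding mat_apply_mult[OF outer_sum_mat_carrier B(1)] mat_apply_outer_sum_mat[OF r]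
      by (simp add: mult.commute)
    finally show "x r = (\<Sum>s\<in>S. std_inner M (g s) (mat_apply B x) * g s r)" .
  qed
qed

lemma equal_gram_extends_to_isometry:
  assumes fin: "finite S"
    and gram: "\<And>s t. s \<in> S \<Longrightarrow> t \<in> S \<Longrightarrow> std_inner M (h s) (h t) = std_inner M (g s) (g t)"
    and nonsingular: "Determinant.det (outer_sum_mat M S g g) \<noteq> 0"
  obtains A where "A \<in> carrier_mat M M" "std_isometry M (mat_apply A)"
    "\<And>t r. t \<in> S \<Longrightarrow> r < M \<Longrightarrow> mat_apply A (g t) r = h t r"
proof -
  obtain B where B: "B \<in> carrier_mat M M"
    and span: "\<And>x r. r < M \<Longrightarrow> x r = (\<Sum>s\<in>S. std_inner M (g s) (mat_apply B x) * g s r)"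
    using outer_sum_mat_det_nonzero_span[OF nonsingular] by blast
  define coef where "coef x s = std_inner M (g s) (mat_apply B x)" for x s
  define A where "A = outer_sum_mat M S g h * B"
  have A: "A \<in> carrier_mat M M"
    unfolding A_def using mult_carrier_mat[OF outer_sum_mat_carrier B] .
  have A_apply: "mat_apply A x r = (\<Sum>s\<in>S. coef x s * h s r)" if "r < M" for x r
    unfolding A_def mat_apply_mult[OF outer_sum_mat_carrier B] mat_apply_outer_sum_mat[OF that]
    by (simp add: coef_def mult.commute)
  have "std_isometry M (mat_apply A)"
    unfolding std_isometry_def
  proof (intro allI)
    fix x y
    have "std_inner M (mat_apply A x) (mat_apply A y)
        = std_inner M (\<lambda>r. \<Sum>s\<in>S. coef x s * h s r) (\<lambda>r. \<Sum>s\<in>S. coef y s * h s r)"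
      by (rule std_inner_cong) (auto simp: A_apply)
    also have "\<dots> = (\<Sum>s\<in>S. \<Sum>t\<in>S. cnj (coef x s) * coef y t * std_inner M (g s) (g t))"
      unfolding std_inner_sum_sum[OF fin fin] using gram by (intro sum.cong refl) auto
    also have "\<dots> = std_inner M (\<lambda>r. \<Sum>s\<in>S. coef x s * g s r) (\<lambda>r. \<Sum>s\<in>S. coef y s * g s r)"
      by (rule std_inner_sum_sum[OF fin fin, symmetric])
    also have "\<dots> = std_inner M x y"
      by (rule std_inner_cong) (auto simp: coef_def span[symmetric])
    finally show "std_inner M (mat_apply A x) (mat_apply A y) = std_inner M x y" .
  qed
  moreover have "mat_apply A (g t) r = h t r" if t: "t \<in> S" and r: "r < M" for t r
  proof -
    have "\<And>q. q < M \<Longrightarrow> g t q = (\<Sum>s\<in>S. coef (g t) s * g s q)"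
      unfolding coef_def by (rule span)
    then have "h t r = (\<Sum>s\<in>S. coef (g t) s * h s r)"
      using equal_gram_transfer_expansion[of S M h g t "coef (g t)" r] fin gram t r by blast
    then show ?thesis by (simp add: A_apply[OF r])
  qed
  ultimately show ?thesis using that A by blast
qed

lemma isometry_obtain_eigenvector:
  assumes A: "A \<in> carrier_mat M M" and M: "0 < M" and iso: "std_isometry M (mat_apply A)"
  obtains e \<nu> where "\<exists>r<M. e r \<noteq> 0" "cmod \<nu> = 1" "\<And>r. r < M \<Longrightarrow> mat_apply A e r = \<nu> * e r"
proof -
  obtain \<nu> where "\<nu> \<in> spectrum A" using spectrum_non_empty[OF A M] by blast
  then obtain v where v: "v \<in> carrier_vec M" "v \<noteq> 0\<^sub>v M" "A *\<^sub>v v = \<nu> \<cdot>\<^sub>v v"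
    unfolding spectrum_def eigenvalue_def eigenvector_def using A by auto
  define e where "e i = v $ i" for i
  have e_nonzero: "\<exists>r<M. e r \<noteq> 0"
    unfolding e_def by (rule carrier_vec_nonzero_entry[OF v(1,2)])
  have eigen: "mat_apply A e r = \<nu> * e r" if "r < M" for r
    unfolding mat_apply_def e_def using A v that by (simp add: vec_index_eta)
  have "std_inner M e e = std_inner M (mat_apply A e) (mat_apply A e)"
    using iso unfolding std_isometry_def by simp
  also have "\<dots> = std_inner M (\<lambda>r. \<nu> * e r) (\<lambda>r. \<nu> * e r)"
    by (rule std_inner_cong) (auto simp: eigen)
  also have "\<dots> = cnj \<nu> * \<nu> * std_inner M e e"
    by (simp add: std_inner_scale_left std_inner_scale_right)
  finally have "cnj \<nu> * \<nu> = 1"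
    using e_nonzero std_inner_self_eq_0D by (metis mult_cancel_right2)
  then have "(cmod \<nu>)\<^sup>2 = 1"
    unfolding cnj_mult_self by (metis of_real_eq_1_iff)
  then have "cmod \<nu> = 1"
    using norm_ge_zero[of \<nu>] by (auto simp: power2_eq_1_iff)
  with e_nonzero eigen show ?thesis using that by blast
qed

text \<open>The vector \<open>f\<close> is an eigenvector of \<open>U\<^sup>*\<close> for a unitary \<open>U\<close> extending
  \<open>g\<^sub>s \<mapsto> h\<^sub>s\<close>.\<close>
lemma equal_gram_obtain_eigenvector:
  assumes fin: "finite S" and M: "0 < M"
    and gram: "\<And>s t. s \<in> S \<Longrightarrow> t \<in> S \<Longrightarrow> std_inner M (h s) (h t) = std_inner M (g s) (g t)"
  obtains f \<mu> where "\<exists>r<M. f r \<noteq> 0" "cmod \<mu> = 1"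
    "\<And>s. s \<in> S \<Longrightarrow> std_inner M (h s) f = \<mu> * std_inner M (g s) f"
proof (cases "Determinant.det (outer_sum_mat M S g g) = 0")
  case True
  obtain y where "\<exists>r<M. y r \<noteq> 0" "\<And>s. s \<in> S \<Longrightarrow> std_inner M (h s) y = std_inner M (g s) y"
    using equal_gram_nonspanning[of S M h g] fin gram True by blast
  then show ?thesis
    using that[of y 1] by simp
next
  case False
  then obtain A where A: "A \<in> carrier_mat M M" "std_isometry M (mat_apply A)"
    and A_g: "\<And>t r. t \<in> S \<Longrightarrow> r < M \<Longrightarrow> mat_apply A (g t) r = h t r"
    using equal_gram_extends_to_isometry[of S M h g] fin gram False by blast
  obtain e \<nu> where e: "\<exists>r<M. e r \<noteq> 0" "cmod \<nu> = 1"
    and eigen: "\<And>r. r < M \<Longrightarrow> mat_apply A e r = \<nu> * e r"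
    using isometry_obtain_eigenvector[OF A(1) M A(2)] by blast
  have "std_inner M (h s) e = cnj \<nu> * std_inner M (g s) e" if s: "s \<in> S" for s
  proof -
    have "\<nu> * std_inner M (h s) e = std_inner M (mat_apply A (g s)) (\<lambda>r. \<nu> * e r)"
      by (simp add: std_inner_scale_right A_g[OF s] std_inner_cong[of M "h s" "mat_apply A (g s)"])
    also have "\<dots> = std_inner M (mat_apply A (g s)) (mat_apply A e)"
      by (rule std_inner_cong) (auto simp: eigen)
    also have "\<dots> = std_inner M (g s) e"
      using A(2) unfolding std_isometry_def by simp
    finally have "\<nu> * std_inner M (h s) e = std_inner M (g s) e" .
    moreover have "cnj \<nu> * \<nu> = 1"
      using e(2) by (simp add: cnj_mult_self)
    ultimately show ?thesis by (metis mult.assoc mult_1)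
  qed
  then show ?thesis
    using that[of e "cnj \<nu>"] e by simp
qed

section \<open>Reflections\<close>

lemma reflection_isometry:
  assumes "cnj \<alpha> = \<alpha>" and "\<alpha> * \<alpha> * std_inner M u u = 2 * \<alpha>"
  shows "std_isometry M (\<lambda>x r. x r - \<alpha> * std_inner M u x * u r)"
  unfolding std_isometry_def
proof (intro allI)
  fix x y
  have "std_inner M (\<lambda>r. x r - \<alpha> * std_inner M u x * u r) (\<lambda>r. y r - \<alpha> * std_inner M u y * u r)
      = std_inner M x y - \<alpha> * std_inner M u y * std_inner M x u
        - \<alpha> * std_inner M x u * std_inner M u y
        + (\<alpha> * \<alpha> * std_inner M u u) * std_inner M x u * std_inner M u y"
    unfolding std_inner_diff_scale by (simp add: assms(1) cnj_std_inner mult_ac)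
  also have "\<dots> = std_inner M x y"
    unfolding assms(2) by (simp add: algebra_simps)
  finally show "std_inner M (\<lambda>r. x r - \<alpha> * std_inner M u x * u r)
      (\<lambda>r. y r - \<alpha> * std_inner M u y * u r) = std_inner M x y" .
qed

lemma householder_reflection:
  assumes unit: "std_inner (Suc M) f f = 1" and real: "f M = of_real t"
  obtains Q where "std_isometry (Suc M) Q" "\<And>x. Q x M = std_inner (Suc M) f x"
proof -
  let ?e = "\<lambda>r. if r = M then 1 else (0::complex)"
  let ?ip = "std_inner (Suc M)"
  define u where "u r = ?e r - f r" for r
  define \<alpha> where "\<alpha> = 2 / ?ip u u"
  define Q where "Q = (\<lambda>x r. x r - \<alpha> * ?ip u x * u r)"
  have e_left: "?ip ?e y = y M" for y by (rule std_inner_delta_left) simp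
  have e_right: "?ip y ?e = cnj (y M)" for y using e_left[of y] cnj_std_inner by metis
  have "?ip u u = ?ip (\<lambda>r. ?e r - 1 * f r) (\<lambda>r. ?e r - 1 * f r)"
    unfolding u_def by simp
  also have "\<dots> = 2 - 2 * of_real t"
    unfolding std_inner_diff_scale e_left e_right unit real by simp
  finally have uu: "?ip u u = of_real (2 - 2 * t)" by simp
  then have cnj_\<alpha>: "cnj \<alpha> = \<alpha>" unfolding \<alpha>_def by simp
  have \<alpha>\<alpha>: "\<alpha> * \<alpha> * ?ip u u = 2 * \<alpha>"
    unfolding \<alpha>_def by (cases "?ip u u = 0") (simp_all add: field_simps)
  have "std_isometry (Suc M) Q"
    unfolding Q_def by (rule reflection_isometry[OF cnj_\<alpha> \<alpha>\<alpha>])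
  moreover have "Q x M = ?ip f x" for x
  proof -
    have "\<alpha> * u M * ?ip u x = ?ip u x"
    proof (cases "?ip u u = 0")
      case True
      then have "u r = 0" if "r < Suc M" for r using std_inner_self_eq_0D that by blast
      then have "?ip u x = 0" unfolding std_inner_def by simp
      then show ?thesis by simp
    next
      case False
      have "?ip u u = 2 * u M" unfolding uu by (simp add: u_def real)
      with False have "\<alpha> * u M = 1" unfolding \<alpha>_def by simp
      then show ?thesis by simp
    qed
    moreover have "?ip f x = x M - ?ip u x"
    proof -
      have "?ip f x = ?ip (\<lambda>r. ?e r - u r) x" by (rule std_inner_cong) (simp_all add: u_def)
      also have "\<dots> = x M - ?ip u x" unfolding std_inner_diff_left e_left ..
      finally show ?thesis .
    qed
    ultimately show ?thesis by (simp add: Q_def mult_ac)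
  qed
  ultimately show ?thesis using that by blast
qed

lemma obtain_unit_multiple_real_last:
  assumes "\<exists>r<Suc M. f r \<noteq> 0"
  obtains c t where "std_inner (Suc M) (\<lambda>r. c * f r) (\<lambda>r. c * f r) = 1" "c * f M = of_real t"
proof -
  define \<omega> where "\<omega> = (if f M = 0 then 1 else cnj (sgn (f M)))"
  have \<omega>_unit: "cnj \<omega> * \<omega> = 1"
    unfolding \<omega>_def cnj_mult_self by (simp add: norm_sgn)
  have \<omega>_real: "\<omega> * f M = of_real (cmod (f M))"
  proof (cases "f M = 0")
    case False
    then have "\<omega> * f M = cnj (f M) * f M / of_real (cmod (f M))"
      by (simp add: \<omega>_def sgn_eq)
    also have "\<dots> = of_real (cmod (f M))"
      unfolding cnj_mult_self using False by (simp add: power2_eq_square)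
    finally show ?thesis .
  qed (simp add: \<omega>_def)
  define \<rho> where "\<rho> = sqrt (\<Sum>r<Suc M. (cmod (f r))\<^sup>2)"
  have "0 < \<rho>"
  proof -
    obtain r where r: "r < Suc M" "f r \<noteq> 0" using assms by blast
    then have "0 < (cmod (f r))\<^sup>2" by simp
    also have "\<dots> \<le> (\<Sum>r<Suc M. (cmod (f r))\<^sup>2)"
      using r by (intro member_le_sum) auto
    finally show ?thesis unfolding \<rho>_def by simp
  qed
  moreover have "of_real (\<rho> * \<rho>) = std_inner (Suc M) f f"
    unfolding std_inner_self \<rho>_def by (simp add: sum_nonneg)
  ultimately have \<rho>: "0 < \<rho>" "of_real (\<rho> * \<rho>) = std_inner (Suc M) f f" by blast+
  show ?thesis
  proof (rule that[of "\<omega> / of_real \<rho>" "cmod (f M) / \<rho>"])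
    show "std_inner (Suc M) (\<lambda>r. \<omega> / of_real \<rho> * f r) (\<lambda>r. \<omega> / of_real \<rho> * f r) = 1"
      unfolding std_inner_scale_left std_inner_scale_right \<rho>(2)[symmetric]
      using \<omega>_unit \<rho>(1) by (simp add: field_simps)
    show "\<omega> / of_real \<rho> * f M = of_real (cmod (f M) / \<rho>)"
      using \<omega>_real by (simp add: field_simps)
  qed
qed

lemma obtain_isometry_last_coordinate:
  assumes "\<exists>r<Suc M. f r \<noteq> 0"
  obtains Q c where "std_isometry (Suc M) Q" "\<And>x. Q x M = c * std_inner (Suc M) f x"
proof -
  obtain c t where "std_inner (Suc M) (\<lambda>r. c * f r) (\<lambda>r. c * f r) = 1" "c * f M = of_real t"
    using obtain_unit_multiple_real_last[OF assms] by blast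
  then obtain Q where "std_isometry (Suc M) Q" "\<And>x. Q x M = std_inner (Suc M) (\<lambda>r. c * f r) x"
    using householder_reflection[of M "\<lambda>r. c * f r" t] by blast
  then show ?thesis
    using that[of Q "cnj c"] by (simp add: std_inner_scale_left)
qed

section \<open>Gram factorisation of positive semidefinite matrices\<close>

definition quad_form :: "nat \<Rightarrow> (nat \<Rightarrow> nat \<Rightarrow> complex) \<Rightarrow> (nat \<Rightarrow> complex) \<Rightarrow> complex" where
  "quad_form N A v = (\<Sum>k<N. \<Sum>l<N. cnj (v k) * A k l * v l)"

definition psd_fun :: "nat \<Rightarrow> (nat \<Rightarrow> nat \<Rightarrow> complex) \<Rightarrow> bool" where
  "psd_fun N A \<longleftrightarrow> (\<forall>k<N. \<forall>l<N. A l k = cnj (A k l)) \<and> (\<forall>v. 0 \<le> Re (quad_form N A v))"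

lemma psd_mat_imp_psd_fun: "psd_mat N A \<Longrightarrow> psd_fun N (\<lambda>k l. A $$ (k, l))"
  unfolding psd_mat_def psd_fun_def quad_form_def by blast

lemma quad_form_cong: "(\<And>k. k < N \<Longrightarrow> v k = w k) \<Longrightarrow> quad_form N A v = quad_form N A w"
  unfolding quad_form_def by (intro sum.cong refl) auto

lemma quad_form_Suc:
  "quad_form (Suc N) A v = quad_form N A v + (\<Sum>k<N. cnj (v k) * A k N) * v N
     + cnj (v N) * (\<Sum>l<N. A N l * v l) + cnj (v N) * A N N * v N"
  unfolding quad_form_def by (simp add: sum.distrib sum_distrib_right sum_distrib_left mult.assoc)

lemma quad_form_single:
  assumes "k < N"
  shows "quad_form N A (\<lambda>j. if j = k then x else 0) = cnj x * A k k * x"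
proof -
  have "quad_form N A (\<lambda>j. if j = k then x else 0)
      = (\<Sum>j<N. \<Sum>l<N. if l = k then (if j = k then cnj x * A k k * x else 0) else 0)"
    unfolding quad_form_def by (intro sum.cong refl) auto
  then show ?thesis using assms by (simp add: sum.delta)
qed

lemma quad_form_Suc_pair:
  assumes k: "k < N"
  shows "quad_form (Suc N) A (\<lambda>j. if j = k then x else if j = N then 1 else 0)
       = cnj x * A k k * x + cnj x * A k N + A N k * x + A N N"
proof -
  have "quad_form N A (\<lambda>j. if j = k then x else if j = N then 1 else 0)
      = quad_form N A (\<lambda>j. if j = k then x else 0)"
    by (rule quad_form_cong) auto
  also have "\<dots> = cnj x * A k k * x"
    by (rule quad_form_single[OF k])
  finally have q1: "quad_form N A (\<lambda>j. if j = k then x else if j = N then 1 else 0)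
      = cnj x * A k k * x" .
  have "(\<Sum>j<N. cnj (if j = k then x else if j = N then 1 else 0) * A j N)
      = (\<Sum>j<N. if j = k then cnj x * A k N else 0)"
    by (intro sum.cong refl) auto
  then have q2: "(\<Sum>j<N. cnj (if j = k then x else if j = N then 1 else 0) * A j N) = cnj x * A k N"
    using k by (simp add: sum.delta)
  have "(\<Sum>l<N. A N l * (if l = k then x else if l = N then 1 else 0))
      = (\<Sum>l<N. if l = k then A N k * x else 0)"
    by (intro sum.cong refl) auto
  then have q3: "(\<Sum>l<N. A N l * (if l = k then x else if l = N then 1 else 0)) = A N k * x"
    using k by (simp add: sum.delta)
  show ?thesis
    unfolding quad_form_Suc q1 q2 q3 using k by simp
qed

lemma psd_fun_hermitian: "psd_fun N A \<Longrightarrow> k < N \<Longrightarrow> l < N \<Longrightarrow> A l k = cnj (A k l)"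
  unfolding psd_fun_def by blast

lemma psd_fun_nonneg: "psd_fun N A \<Longrightarrow> 0 \<le> Re (quad_form N A v)"
  unfolding psd_fun_def by blast

lemma psd_fun_diag:
  assumes A: "psd_fun N A" and k: "k < N"
  shows "0 \<le> Re (A k k)" "A k k = of_real (Re (A k k))"
proof -
  have "quad_form N A (\<lambda>j. if j = k then 1 else 0) = A k k"
    using quad_form_single[OF k, of A 1] by simp
  moreover have "0 \<le> Re (quad_form N A (\<lambda>j. if j = k then 1 else 0))"
    by (rule psd_fun_nonneg[OF A])
  ultimately show "0 \<le> Re (A k k)" by simp
  have "A k k = cnj (A k k)" using psd_fun_hermitian[OF A k k] .
  then have "Im (A k k) = 0" by (metis Reals_cnj_iff complex_is_Real_iff)
  then show "A k k = of_real (Re (A k k))" by (simp add: complex_eq_iff)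
qed

lemma psd_fun_Suc_restrict:
  assumes "psd_fun (Suc N) A"
  shows "psd_fun N A"
  unfolding psd_fun_def
proof (intro conjI allI impI)
  fix k l assume "k < N" "l < N"
  then show "A l k = cnj (A k l)" using psd_fun_hermitian[OF assms, of k l] by simp
next
  fix v :: "nat \<Rightarrow> complex"
  define w where "w j = (if j < N then v j else 0)" for j
  have "quad_form (Suc N) A w = quad_form N A w"
    by (simp add: quad_form_Suc w_def)
  also have "\<dots> = quad_form N A v"
    by (rule quad_form_cong) (simp add: w_def)
  moreover have "0 \<le> Re (quad_form (Suc N) A w)" by (rule psd_fun_nonneg[OF assms])
  ultimately show "0 \<le> Re (quad_form N A v)" by simp
qed

text \<open>Testing with \<open>v = -t c e\<^sub>k + e\<^sub>N\<close>, where \<open>c = A\<^sub>k\<^sub>N\<close>, gives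
  \<open>0 \<le> t\<^sup>2 |c|\<^sup>2 A\<^sub>k\<^sub>k - 2 t |c|\<^sup>2\<close>, which fails for small \<open>t > 0\<close> unless \<open>c = 0\<close>.\<close>
lemma psd_fun_zero_diag_imp_zero_col:
  assumes A: "psd_fun (Suc N) A" and d: "A N N = 0" and k: "k < N"
  shows "A k N = 0"
proof -
  define c where "c = A k N"
  define a where "a = Re (A k k)"
  have a: "0 \<le> a" "A k k = of_real a"
    unfolding a_def using psd_fun_diag[OF A] k by auto
  have Nk: "A N k = cnj c"
    using psd_fun_hermitian[OF A, of k N] k unfolding c_def by simp
  define t where "t = 1 / (a + 1)"
  have t: "0 < t" "t * a < 1" using a(1) unfolding t_def by (simp_all add: field_simps)
  define x where "x = - of_real t * c"
  define v where "v = (\<lambda>j. if j = k then x else if j = N then 1 else 0)"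
  have "quad_form (Suc N) A v = cnj x * A k k * x + cnj x * c + cnj c * x"
    unfolding v_def quad_form_Suc_pair[OF k] Nk d c_def by simp
  also have "\<dots> = of_real t ^ 2 * (cnj c * c) * A k k - 2 * of_real t * (cnj c * c)"
    unfolding x_def by (simp add: algebra_simps power2_eq_square)
  also have "\<dots> = of_real (t\<^sup>2 * (cmod c)\<^sup>2 * a - 2 * t * (cmod c)\<^sup>2)"
    unfolding cnj_mult_self a(2) by simp
  finally have "Re (quad_form (Suc N) A v) = t\<^sup>2 * (cmod c)\<^sup>2 * a - 2 * t * (cmod c)\<^sup>2"
    by simp
  moreover have "0 \<le> Re (quad_form (Suc N) A v)"
    by (rule psd_fun_nonneg[OF A])
  ultimately have "0 \<le> t * (cmod c)\<^sup>2 * (t * a - 2)"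
    by (simp add: algebra_simps power2_eq_square)
  moreover have "t * a - 2 < 0" using t by simp
  ultimately have "t * (cmod c)\<^sup>2 \<le> 0"
    by (simp add: mult_le_0_iff zero_le_mult_iff)
  then have "(cmod c)\<^sup>2 \<le> 0"
    using t by (simp add: mult_le_0_iff)
  then show ?thesis unfolding c_def by simp
qed

text \<open>The last coordinate of the extended vector minimises the quadratic form.\<close>

lemma quad_form_schur_complement:
  assumes herm: "\<And>k l. k < Suc N \<Longrightarrow> l < Suc N \<Longrightarrow> A l k = cnj (A k l)"
    and pivot: "A N N \<noteq> 0"
  shows "quad_form N (\<lambda>a b. A a b - A a N * A N b / A N N) v
       = quad_form (Suc N) A (\<lambda>j. if j < N then v j else - (\<Sum>l<N. A N l * v l) / A N N)"
proof -
  define d where "d = A N N"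
  define s where "s = (\<Sum>l<N. A N l * v l)"
  define w where "w = (\<lambda>j. if j < N then v j else - s / d)"
  have cnj_d: "cnj d = d" unfolding d_def by (rule herm[OF lessI lessI, symmetric])
  have d: "d \<noteq> 0" using pivot unfolding d_def .
  have cnj_s: "(\<Sum>k<N. cnj (v k) * A k N) = cnj s"
  proof -
    have "(\<Sum>k<N. cnj (v k) * A k N) = (\<Sum>k<N. cnj (A N k * v k))"
      using herm[of N] by (intro sum.cong refl) (simp add: mult.commute)
    then show ?thesis unfolding s_def cnj_sum by simp
  qed
  have "quad_form (Suc N) A w = quad_form N A v + cnj s * (- s / d) + cnj (- s / d) * s
      + cnj (- s / d) * d * (- s / d)"
  proof -
    have "quad_form N A w = quad_form N A v" by (rule quad_form_cong) (simp add: w_def)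
    moreover have "(\<Sum>k<N. cnj (w k) * A k N) = cnj s" using cnj_s by (simp add: w_def)
    moreover have "(\<Sum>l<N. A N l * w l) = s" by (simp add: w_def s_def)
    ultimately show ?thesis unfolding quad_form_Suc d_def[symmetric] by (simp add: w_def)
  qed
  also have "\<dots> = quad_form N A v - cnj s * s / d"
    using d cnj_d by (simp add: field_simps)
  also have "\<dots> = quad_form N (\<lambda>a b. A a b - A a N * A N b / A N N) v"
  proof -
    have "quad_form N (\<lambda>a b. A a b - A a N * A N b / A N N) v
        = quad_form N A v - (\<Sum>k<N. \<Sum>l<N. (cnj (v k) * A k N) * (A N l * v l)) / d"
      unfolding quad_form_def d_def by (simp add: sum_subtractf sum_divide_distrib algebra_simps)
    also have "\<dots> = quad_form N A v - cnj s * s / d"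
      unfolding sum_product[symmetric] cnj_s s_def ..
    finally show ?thesis by simp
  qed
  finally show ?thesis
    unfolding w_def s_def d_def by simp
qed

lemma psd_fun_schur_complement:
  assumes A: "psd_fun (Suc N) A" and pivot: "0 < Re (A N N)"
  shows "psd_fun N (\<lambda>a b. A a b - A a N * A N b / A N N)"
proof -
  have herm: "A l k = cnj (A k l)" if "k < Suc N" "l < Suc N" for k l
    using psd_fun_hermitian[OF A that] .
  have "A N N \<noteq> 0" using pivot by auto
  show ?thesis unfolding psd_fun_def
  proof (intro conjI allI impI)
    fix k l assume kl: "k < N" "l < N"
    define d where "d = A N N"
    have "cnj d = d"
      unfolding d_def by (rule herm[OF lessI lessI, symmetric])
    then show "A l k - A l N * A N k / A N N = cnj (A k l - A k N * A N l / A N N)"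
      using herm[of k l] herm[of k N] herm[of N l] kl unfolding d_def[symmetric] by simp
  next
    fix v
    show "0 \<le> Re (quad_form N (\<lambda>a b. A a b - A a N * A N b / A N N) v)"
      using psd_fun_nonneg[OF A]
      by (subst quad_form_schur_complement[where N = N and A = A, OF herm \<open>A N N \<noteq> 0\<close>])
  qed
qed

text \<open>One step of the Cholesky factorisation: the new vectors are
  \<open>(g\<^sub>a, A\<^sub>N\<^sub>a / \<surd>A\<^sub>N\<^sub>N)\<close> for \<open>a < N\<close> and \<open>(0, \<surd>A\<^sub>N\<^sub>N)\<close>.\<close>
lemma gram_of_schur_complement:
  assumes herm: "\<And>k l. k < Suc N \<Longrightarrow> l < Suc N \<Longrightarrow> A l k = cnj (A k l)"
    and pivot: "A N N = of_real d" "0 < d"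
    and g: "\<And>a b. a < N \<Longrightarrow> b < N \<Longrightarrow> A a b - A a N * A N b / A N N = std_inner M (g a) (g b)"
  obtains G where "\<And>a b. a < Suc N \<Longrightarrow> b < Suc N \<Longrightarrow> A a b = std_inner (Suc M) (G a) (G b)"
proof -
  define \<sigma> where "\<sigma> = complex_of_real (sqrt d)"
  have "\<sigma> * \<sigma> = of_real (sqrt d * sqrt d)"
    by (simp only: \<sigma>_def of_real_mult)
  also have "\<dots> = A N N"
    using pivot by simp
  finally have \<sigma>: "\<sigma> \<noteq> 0" "\<sigma> * \<sigma> = A N N" "cnj \<sigma> = \<sigma>"
    unfolding \<sigma>_def using pivot by simp_all
  define G where "G a r = (if r < M then (if a < N then g a r else 0)
                                else (if a < N then A N a / \<sigma> else \<sigma>))" for a r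
  have G_inner: "std_inner (Suc M) (G a) (G b)
      = (if a < N \<and> b < N then std_inner M (g a) (g b) else 0) + cnj (G a M) * G b M" for a b
  proof -
    have "std_inner M (G a) (G b) = (if a < N \<and> b < N then std_inner M (g a) (g b) else 0)"
      by (auto simp: G_def std_inner_def)
    then show ?thesis unfolding std_inner_Suc by simp
  qed
  show ?thesis
  proof (rule that)
    fix a b assume "a < Suc N" "b < Suc N"
    then consider "a < N" "b < N" | "a < N" "b = N" | "a = N" "b < N" | "a = N" "b = N"
      by linarith
    then show "A a b = std_inner (Suc M) (G a) (G b)"
    proof cases
      case 1
      then show ?thesis
        using g[OF 1, symmetric] herm[of a N] \<sigma> unfolding G_inner by (simp add: G_def)
    next
      case 2
      then show ?thesis
        using herm[of a N] \<sigma> unfolding G_inner by (simp add: G_def)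
    next
      case 3
      then show ?thesis
        using \<sigma> unfolding G_inner by (simp add: G_def)
    next
      case 4
      then show ?thesis
        using \<sigma> unfolding G_inner by (simp add: G_def)
    qed
  qed
qed

lemma psd_fun_gram:
  "psd_fun N A \<Longrightarrow> \<exists>M g. \<forall>a<N. \<forall>b<N. A a b = std_inner M (g a) (g b)"
proof (induction N arbitrary: A)
  case 0
  then show ?case by auto
next
  case (Suc N)
  note A = Suc.prems
  have herm: "A l k = cnj (A k l)" if "k < Suc N" "l < Suc N" for k l
    using psd_fun_hermitian[OF A that] .
  have pivot: "0 \<le> Re (A N N)" "A N N = of_real (Re (A N N))"
    using psd_fun_diag[OF A, of N] by auto
  show ?case
  proof (cases "Re (A N N) = 0")
    case True
    then have "A N N = 0" using pivot by simp
    then have col: "A k N = 0" "A N k = 0" if "k < N" for k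
      using psd_fun_zero_diag_imp_zero_col[OF A _ that] herm[of N k] that by auto
    obtain M g where g: "\<forall>a<N. \<forall>b<N. A a b = std_inner M (g a) (g b)"
      using Suc.IH[OF psd_fun_Suc_restrict[OF A]] by blast
    define G where "G a = (if a < N then g a else (\<lambda>_. 0))" for a
    have "A a b = std_inner M (G a) (G b)" if "a < Suc N" "b < Suc N" for a b
      using g that col \<open>A N N = 0\<close> by (cases "a < N"; cases "b < N") (auto simp: G_def less_Suc_eq)
    then show ?thesis by blast
  next
    case False
    with pivot have "0 < Re (A N N)" by simp
    then obtain M g
      where g: "\<And>a b. a < N \<Longrightarrow> b < N \<Longrightarrow> A a b - A a N * A N b / A N N = std_inner M (g a) (g b)"
      using Suc.IH[OF psd_fun_schur_complement[OF A]] by blast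
    obtain G where "\<And>a b. a < Suc N \<Longrightarrow> b < Suc N \<Longrightarrow> A a b = std_inner (Suc M) (G a) (G b)"
      using gram_of_schur_complement[of N A "Re (A N N)" M g, OF herm pivot(2) \<open>0 < Re (A N N)\<close> g]
      by blast
    then show ?thesis by blast
  qed
qed

section \<open>Complex Hilbert spaces\<close>

lemma scaleC_zero_left [simp]: "(0::complex) *\<^sub>C (x::'a::chilbert) = 0"
proof -
  have "(0::complex) *\<^sub>C x = (0 + 0) *\<^sub>C x" by simp
  also have "\<dots> = 0 *\<^sub>C x + 0 *\<^sub>C x" by (rule scaleC_add_left)
  finally show ?thesis by simp
qed

lemma cinner_zero_right [simp]: "cinner (x::'a::chilbert) 0 = 0"
proof -
  have "cinner x 0 = cinner x ((0::complex) *\<^sub>C 0)" by simp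
  also have "\<dots> = 0" by (simp only: cinner_scaleC_right) simp
  finally show ?thesis .
qed

lemma cinner_scaleC_left: "cinner (a *\<^sub>C (x::'a::chilbert)) y = cnj a * cinner x y"
  by (metis cinner_cnj cinner_scaleC_right complex_cnj_cnj complex_cnj_mult)

lemma cinner_add_left: "cinner ((x::'a::chilbert) + y) z = cinner x z + cinner y z"
  by (metis cinner_cnj cinner_add_right complex_cnj_add)

lemma cinner_zero_left [simp]: "cinner 0 (y::'a::chilbert) = 0"
  by (metis cinner_cnj cinner_zero_right complex_cnj_zero)

lemma cinner_sum_right: "cinner (x::'a::chilbert) (\<Sum>i\<in>I. f i) = (\<Sum>i\<in>I. cinner x (f i))"
  by (induction I rule: infinite_finite_induct) (simp_all add: cinner_add_right)

lemma cinner_sum_left: "cinner (\<Sum>i\<in>I. (f i::'a::chilbert)) y = (\<Sum>i\<in>I. cinner (f i) y)"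
  by (induction I rule: infinite_finite_induct) (simp_all add: cinner_add_left)

lemma bounded_op_zero: "bounded_op T \<Longrightarrow> T 0 = 0"
  unfolding bounded_op_def by (metis add_cancel_right_right add_0)

lemma bounded_op_sum: "bounded_op T \<Longrightarrow> T (\<Sum>i\<in>I. f i) = (\<Sum>i\<in>I. T (f i))"
  by (induction I rule: infinite_finite_induct) (auto simp: bounded_op_zero, simp add: bounded_op_def)

lemma bounded_op_scaleC: "bounded_op T \<Longrightarrow> T (a *\<^sub>C x) = a *\<^sub>C T x"
  unfolding bounded_op_def by blast

lemma positive_op_nonneg: "positive_op T \<Longrightarrow> 0 \<le> cinner x (T x)"
  unfolding positive_op_def less_eq_complex_def by simp

lemma linear_map_to_BH_add:
  "linear_map_to_BH n \<phi> \<Longrightarrow> X \<in> carrier_mat n n \<Longrightarrow> Y \<in> carrier_mat n n \<Longrightarrow>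
    \<phi> (X + Y) x = \<phi> X x + \<phi> Y x"
  unfolding linear_map_to_BH_def by metis

lemma linear_map_to_BH_smult:
  "linear_map_to_BH n \<phi> \<Longrightarrow> X \<in> carrier_mat n n \<Longrightarrow> \<phi> (a \<cdot>\<^sub>m X) x = a *\<^sub>C \<phi> X x"
  unfolding linear_map_to_BH_def by metis

lemma linear_map_to_BH_zero:
  fixes \<phi> :: "complex mat \<Rightarrow> 'a::chilbert \<Rightarrow> 'a"
  assumes "linear_map_to_BH n \<phi>"
  shows "\<phi> (0\<^sub>m n n) x = 0"
proof -
  have "(0::complex) \<cdot>\<^sub>m 0\<^sub>m n n = 0\<^sub>m n n" by (rule eq_matI) auto
  then have "\<phi> (0\<^sub>m n n) x = (0::complex) *\<^sub>C \<phi> (0\<^sub>m n n) x"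
    using linear_map_to_BH_smult[OF assms zero_carrier_mat, of 0 x] by metis
  then show ?thesis by simp
qed

lemma positive_map_weighted_sum_nonneg:
  fixes \<phi> :: "complex mat \<Rightarrow> 'a::chilbert \<Rightarrow> 'a"
  assumes lin: "linear_map_to_BH n \<phi>" and pos: "positive_map n \<phi>" and B: "psd_mat n B"
  shows "0 \<le> (\<Sum>i<p. \<Sum>j<p. (\<beta> i * cnj (\<beta> j)) * cinner (h i) (\<phi> B (h j)))"
proof -
  have bounded: "bounded_op (\<phi> B)"
    using lin B unfolding linear_map_to_BH_def psd_mat_def by blast
  define y where "y = (\<Sum>j<p. cnj (\<beta> j) *\<^sub>C h j)"
  have "cinner y (\<phi> B y) = (\<Sum>j<p. cnj (\<beta> j) * (\<Sum>i<p. \<beta> i * cinner (h i) (\<phi> B (h j))))"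
    unfolding y_def bounded_op_sum[OF bounded] bounded_op_scaleC[OF bounded]
      cinner_sum_right cinner_scaleC_right cinner_sum_left cinner_scaleC_left
    by simp
  also have "\<dots> = (\<Sum>j<p. \<Sum>i<p. (\<beta> i * cnj (\<beta> j)) * cinner (h i) (\<phi> B (h j)))"
    by (simp add: sum_distrib_left mult_ac)
  also have "\<dots> = (\<Sum>i<p. \<Sum>j<p. (\<beta> i * cnj (\<beta> j)) * cinner (h i) (\<phi> B (h j)))"
    by (rule sum.swap)
  finally have "cinner y (\<phi> B y) = (\<Sum>i<p. \<Sum>j<p. (\<beta> i * cnj (\<beta> j)) * cinner (h i) (\<phi> B (h j)))" .
  moreover have "0 \<le> cinner y (\<phi> B y)"
    using pos B positive_op_nonneg unfolding positive_map_def by blast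
  ultimately show ?thesis by simp
qed

section \<open>Block Toeplitz Gram matrices\<close>

definition gram_block :: "nat \<Rightarrow> nat \<Rightarrow> (nat \<Rightarrow> nat \<Rightarrow> complex) \<Rightarrow> (nat \<Rightarrow> nat \<Rightarrow> complex) \<Rightarrow> complex mat" where
  "gram_block M n u v = mat n n (\<lambda>(k, l). std_inner M (u k) (v l))"

definition shift_invariant :: "nat \<Rightarrow> nat \<Rightarrow> nat \<Rightarrow> (nat \<Rightarrow> nat \<Rightarrow> nat \<Rightarrow> complex) \<Rightarrow> bool" where
  "shift_invariant M p n G \<longleftrightarrow> (\<forall>i<p. \<forall>j<p. \<forall>k l. Suc k < n \<longrightarrow> Suc l < n \<longrightarrow>
     std_inner M (G i (Suc k)) (G j (Suc l)) = std_inner M (G i k) (G j l))"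

definition geometric_outer_mat :: "nat \<Rightarrow> complex \<Rightarrow> complex mat" where
  "geometric_outer_mat n \<mu> = mat n n (\<lambda>(k, l). \<mu> ^ k * cnj \<mu> ^ l)"

lemma gram_block_carrier: "gram_block M n u v \<in> carrier_mat n n"
  unfolding gram_block_def by simp

lemma geometric_outer_mat_carrier: "geometric_outer_mat n \<mu> \<in> carrier_mat n n"
  unfolding geometric_outer_mat_def by simp

lemma power_cnj_power_Suc:
  assumes "cmod \<mu> = 1"
  shows "\<mu> ^ Suc k * cnj \<mu> ^ Suc l = \<mu> ^ k * cnj \<mu> ^ l"
proof -
  have "\<mu> * cnj \<mu> = 1"
    using assms by (metis complex_norm_square of_real_1 power_one)
  moreover have "\<mu> ^ Suc k * cnj \<mu> ^ Suc l = (\<mu> * cnj \<mu>) * (\<mu> ^ k * cnj \<mu> ^ l)"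
    by (simp add: mult_ac)
  ultimately show ?thesis by simp
qed

lemma psd_geometric_outer_mat: "psd_mat n (geometric_outer_mat n \<mu>)"
  unfolding psd_mat_def
proof (intro conjI allI impI geometric_outer_mat_carrier)
  fix k l assume "k < n" "l < n"
  then show "geometric_outer_mat n \<mu> $$ (l, k) = cnj (geometric_outer_mat n \<mu> $$ (k, l))"
    by (simp add: geometric_outer_mat_def mult.commute)
next
  fix v :: "nat \<Rightarrow> complex"
  define w where "w = (\<Sum>l<n. cnj \<mu> ^ l * v l)"
  have "(\<Sum>k<n. \<Sum>l<n. cnj (v k) * geometric_outer_mat n \<mu> $$ (k, l) * v l)
      = (\<Sum>k<n. cnj (v k) * \<mu> ^ k) * w"
    unfolding w_def sum_product by (intro sum.cong refl) (simp add: geometric_outer_mat_def mult_ac)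
  also have "(\<Sum>k<n. cnj (v k) * \<mu> ^ k) = cnj w"
    unfolding w_def cnj_sum by (simp add: mult.commute)
  finally have "(\<Sum>k<n. \<Sum>l<n. cnj (v k) * geometric_outer_mat n \<mu> $$ (k, l) * v l)
      = of_real ((cmod w)\<^sup>2)"
    unfolding cnj_mult_self .
  then show "Im (\<Sum>k<n. \<Sum>l<n. cnj (v k) * geometric_outer_mat n \<mu> $$ (k, l) * v l) = 0"
    and "0 \<le> Re (\<Sum>k<n. \<Sum>l<n. cnj (v k) * geometric_outer_mat n \<mu> $$ (k, l) * v l)"
    by simp_all
qed

text \<open>Shift invariance makes \<open>G\<^sub>i\<^sub>,\<^sub>k \<mapsto> G\<^sub>i\<^sub>,\<^sub>k\<^sub>+\<^sub>1\<close> isometric.\<close>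
lemma shift_invariant_obtain_eigenvector:
  assumes G: "shift_invariant M p n G" and M: "0 < M"
  obtains f \<mu> where "\<exists>r<M. f r \<noteq> 0" "cmod \<mu> = 1"
    "\<And>i k. i < p \<Longrightarrow> k < n \<Longrightarrow> std_inner M (G i k) f = \<mu> ^ k * std_inner M (G i 0) f"
proof -
  define S where "S = {..<p} \<times> {k. Suc k < n}"
  have S: "finite S"
    unfolding S_def by (rule finite_cartesian_product) (auto intro: finite_subset[of _ "{..<n}"])
  have gram: "std_inner M ((\<lambda>(i, k). G i (Suc k)) s) ((\<lambda>(i, k). G i (Suc k)) t)
      = std_inner M ((\<lambda>(i, k). G i k) s) ((\<lambda>(i, k). G i k) t)" if "s \<in> S" "t \<in> S" for s t
    using that G unfolding S_def shift_invariant_def by (auto split: prod.splits)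
  obtain f \<mu> where f: "\<exists>r<M. f r \<noteq> 0" and \<mu>: "cmod \<mu> = 1"
    and shift: "\<And>s. s \<in> S \<Longrightarrow>
      std_inner M ((\<lambda>(i, k). G i (Suc k)) s) f = \<mu> * std_inner M ((\<lambda>(i, k). G i k) s) f"
    using equal_gram_obtain_eigenvector[of S M "\<lambda>(i, k). G i (Suc k)" "\<lambda>(i, k). G i k",
        OF S M gram]
    by blast
  have power: "std_inner M (G i k) f = \<mu> ^ k * std_inner M (G i 0) f" if "i < p" "k < n" for i k
    using that(2)
  proof (induction k)
    case (Suc k)
    then have "(i, k) \<in> S" using that(1) unfolding S_def by simp
    then show ?case using shift Suc by fastforce
  qed simp
  show ?thesis
    by (rule that[of f \<mu>, OF f \<mu> power])
qed

text \<open>A unitary moving the eigenvector \<open>f\<close> to the last coordinate peels off the rank one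
  part.\<close>
lemma shift_invariant_split:
  assumes G: "shift_invariant (Suc M) p n G"
  obtains G' \<beta> \<mu> where "shift_invariant M p n G'"
    "\<And>i j. i < p \<Longrightarrow> j < p \<Longrightarrow> gram_block (Suc M) n (G i) (G j)
       = gram_block M n (G' i) (G' j) + (\<beta> i * cnj (\<beta> j)) \<cdot>\<^sub>m geometric_outer_mat n \<mu>"
proof -
  let ?ip = "std_inner (Suc M)"
  obtain f \<mu> where f: "\<exists>r<Suc M. f r \<noteq> 0" and \<mu>: "cmod \<mu> = 1"
    and power: "\<And>i k. i < p \<Longrightarrow> k < n \<Longrightarrow> ?ip (G i k) f = \<mu> ^ k * ?ip (G i 0) f"
    using shift_invariant_obtain_eigenvector[OF G zero_less_Suc] by blast
  obtain Q c where Q: "std_isometry (Suc M) Q" "\<And>x. Q x M = c * ?ip f x"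
    using obtain_isometry_last_coordinate[OF f] by blast
  define G' where "G' i k = Q (G i k)" for i k
  define \<beta> where "\<beta> i = cnj c * ?ip (G i 0) f" for i
  have last: "cnj (Q (G i k) M) = \<mu> ^ k * \<beta> i" if "i < p" "k < n" for i k
    by (simp add: Q(2) \<beta>_def cnj_std_inner power[OF that] mult_ac)
  have split: "?ip (G i k) (G j l)
      = std_inner M (G' i k) (G' j l) + (\<beta> i * cnj (\<beta> j)) * (\<mu> ^ k * cnj \<mu> ^ l)"
    if "i < p" "j < p" "k < n" "l < n" for i j k l
  proof -
    have "?ip (G i k) (G j l) = ?ip (G' i k) (G' j l)"
      using Q(1) unfolding G'_def std_isometry_def by simp
    also have "\<dots> = std_inner M (G' i k) (G' j l) + cnj (Q (G i k) M) * cnj (cnj (Q (G j l) M))"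
      unfolding std_inner_Suc G'_def by simp
    also have "\<dots> = std_inner M (G' i k) (G' j l) + (\<mu> ^ k * \<beta> i) * cnj (\<mu> ^ l * \<beta> j)"
      by (simp only: last[OF that(1,3)] last[OF that(2,4)])
    finally show ?thesis by (simp add: mult_ac)
  qed
  have "shift_invariant M p n G'"
    unfolding shift_invariant_def
  proof (intro allI impI)
    fix i j k l assume ij: "i < p" "j < p" and kl: "Suc k < n" "Suc l < n"
    have "?ip (G i (Suc k)) (G j (Suc l)) = ?ip (G i k) (G j l)"
      using G ij kl unfolding shift_invariant_def by blast
    then show "std_inner M (G' i (Suc k)) (G' j (Suc l)) = std_inner M (G' i k) (G' j l)"
      using split[OF ij kl, unfolded power_cnj_power_Suc[OF \<mu>]] split[OF ij, of k l] kl by simp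
  qed
  moreover have "gram_block (Suc M) n (G i) (G j)
      = gram_block M n (G' i) (G' j) + (\<beta> i * cnj (\<beta> j)) \<cdot>\<^sub>m geometric_outer_mat n \<mu>"
    if "i < p" "j < p" for i j
    by (rule eq_matI) (auto simp: gram_block_def geometric_outer_mat_def split[OF that])
  ultimately show ?thesis using that by blast
qed

lemma shift_invariant_gram_block_nonneg:
  fixes \<phi> :: "complex mat \<Rightarrow> 'a::chilbert \<Rightarrow> 'a" and h :: "nat \<Rightarrow> 'a"
  assumes lin: "linear_map_to_BH n \<phi>" and pos: "positive_map n \<phi>"
  shows "shift_invariant M p n G \<Longrightarrow>
    0 \<le> (\<Sum>i<p. \<Sum>j<p. cinner (h i) (\<phi> (gram_block M n (G i) (G j)) (h j)))"
proof (induction M arbitrary: G)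
  case 0
  have "gram_block 0 n (G i) (G j) = 0\<^sub>m n n" for i j
    by (rule eq_matI) (auto simp: gram_block_def std_inner_def)
  then show ?case using linear_map_to_BH_zero[OF lin] by simp
next
  case (Suc M)
  obtain G' \<beta> \<mu> where G': "shift_invariant M p n G'"
    and split: "\<And>i j. i < p \<Longrightarrow> j < p \<Longrightarrow> gram_block (Suc M) n (G i) (G j)
       = gram_block M n (G' i) (G' j) + (\<beta> i * cnj (\<beta> j)) \<cdot>\<^sub>m geometric_outer_mat n \<mu>"
    using shift_invariant_split[OF Suc.prems] by blast
  have "(\<Sum>i<p. \<Sum>j<p. cinner (h i) (\<phi> (gram_block (Suc M) n (G i) (G j)) (h j)))
     = (\<Sum>i<p. \<Sum>j<p. cinner (h i) (\<phi> (gram_block M n (G' i) (G' j)) (h j)))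
     + (\<Sum>i<p. \<Sum>j<p. (\<beta> i * cnj (\<beta> j)) * cinner (h i) (\<phi> (geometric_outer_mat n \<mu>) (h j)))"
    by (simp add: split sum.distrib cinner_add_right cinner_scaleC_right
        linear_map_to_BH_add[OF lin] linear_map_to_BH_smult[OF lin]
        gram_block_carrier geometric_outer_mat_carrier)
  also have "0 \<le> \<dots>"
    using Suc.IH[OF G'] positive_map_weighted_sum_nonneg[OF lin pos psd_geometric_outer_mat]
    by (rule add_nonneg_nonneg)
  finally show ?case by simp
qed

lemma psd_block_mat_obtain_gram:
  assumes psd: "psd_mat (p * n) (block_mat p n X)"
    and blocks: "\<And>i j. i < p \<Longrightarrow> j < p \<Longrightarrow> X i j \<in> carrier_mat n n"
  obtains M G where "\<And>i j. i < p \<Longrightarrow> j < p \<Longrightarrow> X i j = gram_block M n (G i) (G j)"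
proof -
  obtain M g where g: "\<forall>a<p * n. \<forall>b<p * n. block_mat p n X $$ (a, b) = std_inner M (g a) (g b)"
    using psd_fun_gram[OF psd_mat_imp_psd_fun[OF psd]] by blast
  have index: "i * n + k < p * n" if "i < p" "k < n" for i k
  proof -
    have "Suc i * n \<le> p * n" using that by (intro mult_le_mono1) simp
    then show ?thesis using that by simp
  qed
  show ?thesis
  proof (rule that[of M "\<lambda>i k. g (i * n + k)"])
    fix i j assume ij: "i < p" "j < p"
    show "X i j = gram_block M n (\<lambda>k. g (i * n + k)) (\<lambda>k. g (j * n + k))"
    proof (rule eq_matI)
      fix k l assume "k < dim_row (gram_block M n (\<lambda>k. g (i * n + k)) (\<lambda>k. g (j * n + k)))"
        "l < dim_col (gram_block M n (\<lambda>k. g (i * n + k)) (\<lambda>k. g (j * n + k)))"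
      then have kl: "k < n" "l < n" by (auto simp: gram_block_def)
      have "X i j $$ (k, l) = block_mat p n X $$ (i * n + k, j * n + l)"
        unfolding block_mat_def using ij kl index by simp
      then show "X i j $$ (k, l) = gram_block M n (\<lambda>k. g (i * n + k)) (\<lambda>k. g (j * n + k)) $$ (k, l)"
        using g ij kl index by (simp add: gram_block_def)
    qed (use blocks[OF ij] in \<open>auto simp: gram_block_def\<close>)
  qed
qed

lemma toeplitz_gram_block_shift_invariant:
  assumes "\<And>i j. i < p \<Longrightarrow> j < p \<Longrightarrow> toeplitz_mat n (gram_block M n (G i) (G j))"
  shows "shift_invariant M p n G"
  unfolding shift_invariant_def
proof (intro allI impI)
  fix i j k l assume ij: "i < p" "j < p" and kl: "Suc k < n" "Suc l < n"
  obtain \<tau> where \<tau>: "\<forall>k<n. \<forall>l<n. gram_block M n (G i) (G j) $$ (k, l) = \<tau> (int k - int l)"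
    using assms[OF ij] unfolding toeplitz_mat_def by blast
  have "gram_block M n (G i) (G j) $$ (Suc k, Suc l) = gram_block M n (G i) (G j) $$ (k, l)"
    using \<tau> kl by simp
  then show "std_inner M (G i (Suc k)) (G j (Suc l)) = std_inner M (G i k) (G j l)"
    using kl by (simp add: gram_block_def)
qed

theorem theorem5p1:
  fixes n :: nat and \<phi> :: "complex mat \<Rightarrow> 'a::chilbert \<Rightarrow> 'a"
  assumes "linear_map_to_BH n \<phi>"
    and "positive_map n \<phi>"
  shows "\<forall>p :: nat. \<forall>X :: nat \<Rightarrow> nat \<Rightarrow> complex mat.
           (\<forall>i<p. \<forall>j<p. toeplitz_mat n (X i j)) \<and> psd_mat (p * n) (block_mat p n X) \<longrightarrow>
           (\<forall>h :: nat \<Rightarrow> 'a.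
              Im (\<Sum>i<p. \<Sum>j<p. cinner (h i) (\<phi> (X i j) (h j))) = 0
            \<and> Re (\<Sum>i<p. \<Sum>j<p. cinner (h i) (\<phi> (X i j) (h j))) \<ge> 0)"
proof (intro allI impI)
  fix p :: nat and X :: "nat \<Rightarrow> nat \<Rightarrow> complex mat" and h :: "nat \<Rightarrow> 'a"
  assume "(\<forall>i<p. \<forall>j<p. toeplitz_mat n (X i j)) \<and> psd_mat (p * n) (block_mat p n X)"
  then have toeplitz: "\<And>i j. i < p \<Longrightarrow> j < p \<Longrightarrow> toeplitz_mat n (X i j)"
    and psd: "psd_mat (p * n) (block_mat p n X)" by auto
  have "X i j \<in> carrier_mat n n" if "i < p" "j < p" for i j
    using toeplitz[OF that] unfolding toeplitz_mat_def by blast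
  then obtain M G where X: "\<And>i j. i < p \<Longrightarrow> j < p \<Longrightarrow> X i j = gram_block M n (G i) (G j)"
    using psd_block_mat_obtain_gram[OF psd] by blast
  have "shift_invariant M p n G"
    using toeplitz by (intro toeplitz_gram_block_shift_invariant) (simp add: X)
  then have "0 \<le> (\<Sum>i<p. \<Sum>j<p. cinner (h i) (\<phi> (gram_block M n (G i) (G j)) (h j)))"
    by (rule shift_invariant_gram_block_nonneg[OF assms])
  also have "\<dots> = (\<Sum>i<p. \<Sum>j<p. cinner (h i) (\<phi> (X i j) (h j)))"
    by (simp add: X)
  finally show "Im (\<Sum>i<p. \<Sum>j<p. cinner (h i) (\<phi> (X i j) (h j))) = 0
      \<and> Re (\<Sum>i<p. \<Sum>j<p. cinner (h i) (\<phi> (X i j) (h j))) \<ge> 0"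
    by (simp add: less_eq_complex_def)
qed

end
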